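(* Fix $E^2=\operatorname{diag}(\lambda_1,\lambda_2,\lambda_3)$ with $\lambda_i>0$ and $E^1=0$, and let $a=\frac{\partial E^3_{111}}{\partial E^1_1}$, $b=\frac{\partial E^3_{112}}{\partial E^1_2}$, $c=\frac{\partial E^3_{113}}{\partial E^1_3}$, $d=\frac{\partial E^3_{122}}{\partial E^1_1}$, all evaluated at $E^1=0$. Let $J_x\in\mathbb{R}^{9\times9}$ be the matrix whose only nonzero entries are $(J_x)_{1,2}=(J_x)_{2,5}=(J_x)_{3,6}=(J_x)_{4,7}=1$, $(J_x)_{5,2}=a$, $(J_x)_{6,3}=b$, $(J_x)_{7,4}=c$, $(J_x)_{8,2}=d$ (this is the Jacobian of the $x$-flux $f_x=(E^1_1,E^2_{11},E^2_{12},E^2_{13},E^3_{111},E^3_{112},E^3_{113},E^3_{122},E^3_{123})$ with respect to $E=(E^0,E^1_1,E^1_2,E^1_3,E^2_{11},E^2_{12},E^2_{13},E^2_{22},E^2_{23})$ at this state). Then $J_x$ is real diagonalizable if and only if $\sigma_1>0$, equivalently if and only if $3\lambda_1^2+\lambda_1(\lambda_2+\lambda_3)-\lambda_2\lambda_3>0$.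
   Context: With $R_i=e_i$ and $F_i=E^1_i$: for $x,y>0$, $g(x,y;a',b')=\dfrac{2(x-a'^2/x)(y-b'^2/y)(x-a'^2/x+y-b'^2/y)}{3(x+y)^2}$; for $\{i,j,k\}=\{1,2,3\}$, $\sigma_i=\lambda_i-g(\lambda_i,\lambda_j;F_i,F_j)-g(\lambda_i,\lambda_k;F_i,F_k)$, $w_i=\sigma_i+2g(\lambda_j,\lambda_k;F_j,F_k)$; $\sigma_1$ in the claim is evaluated at $E^1=0$. With $\tau_l=\dfrac{\sigma_l^2+2F_l^2-3w_l\sigma_l}{2F_l^2-w_l\sigma_l-w_l^2}$, the 3D $B_2$ third-order closure is $E^3_{lll}=F_l\tau_l$, $E^3_{ijk}=\frac{F_l}{2}(1-\tau_l)$ when $(i,j,k)$ is a permutation of $(l,m,m)$ with $m\ne l$, and $E^3_{123}=0$; the derivatives $a,b,c,d$ are taken with respect to $E^1$ with $E^0,E^2$ (hence $R_i=e_i$) fixed. *)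

theory Defs
  imports Complex_Main "Jordan_Normal_Form.Matrix"
begin

(* Indices 1,2,3.  lam i = \<lambda>_i (E^2 = diag(lam 1, lam 2, lam 3)),
   F i = F_i = E^1_i. *)

definition gfun :: "real \<Rightarrow> real \<Rightarrow> real \<Rightarrow> real \<Rightarrow> real" where
  "gfun x y a' b' =
     2 * (x - a'^2 / x) * (y - b'^2 / y) * (x - a'^2 / x + y - b'^2 / y) / (3 * (x + y)^2)"

(* the two indices j, k with {i,j,k} = {1,2,3} *)
definition oth1 :: "nat \<Rightarrow> nat" where
  "oth1 i = (if i = 1 then 2 else 1)"
definition oth2 :: "nat \<Rightarrow> nat" where
  "oth2 i = (if i = 3 then 2 else 3)"

definition sigma :: "(nat \<Rightarrow> real) \<Rightarrow> (nat \<Rightarrow> real) \<Rightarrow> nat \<Rightarrow> real" where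
  "sigma lam F i = lam i - gfun (lam i) (lam (oth1 i)) (F i) (F (oth1 i))
                         - gfun (lam i) (lam (oth2 i)) (F i) (F (oth2 i))"

definition wfun :: "(nat \<Rightarrow> real) \<Rightarrow> (nat \<Rightarrow> real) \<Rightarrow> nat \<Rightarrow> real" where
  "wfun lam F i = sigma lam F i
      + 2 * gfun (lam (oth1 i)) (lam (oth2 i)) (F (oth1 i)) (F (oth2 i))"

definition tau :: "(nat \<Rightarrow> real) \<Rightarrow> (nat \<Rightarrow> real) \<Rightarrow> nat \<Rightarrow> real" where
  "tau lam F l =
     ((sigma lam F l)^2 + 2 * (F l)^2 - 3 * wfun lam F l * sigma lam F l) /
     (2 * (F l)^2 - wfun lam F l * sigma lam F l - (wfun lam F l)^2)"

definition E3 :: "(nat \<Rightarrow> real) \<Rightarrow> (nat \<Rightarrow> real) \<Rightarrow> nat \<Rightarrow> nat \<Rightarrow> nat \<Rightarrow> real" where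
  "E3 lam F i j k =
     (if i = j \<and> j = k then F i * tau lam F i
      else if i \<noteq> j \<and> j \<noteq> k \<and> i \<noteq> k then 0
      else (let l = (if i = j then k else if i = k then j else i)
            in F l / 2 * (1 - tau lam F l)))"

(* The 9x9 matrix J_x, given with 1-based entries *)
definition Jx_entry :: "real \<Rightarrow> real \<Rightarrow> real \<Rightarrow> real \<Rightarrow> nat \<Rightarrow> nat \<Rightarrow> real" where
  "Jx_entry a b c d i j =
     (if (i, j) = (1, 2) \<or> (i, j) = (2, 5) \<or> (i, j) = (3, 6) \<or> (i, j) = (4, 7) then 1
      else if (i, j) = (5, 2) then a
      else if (i, j) = (6, 3) then b
      else if (i, j) = (7, 4) then c
      else if (i, j) = (8, 2) then d
      else 0)"

definition Jx :: "real \<Rightarrow> real \<Rightarrow> real \<Rightarrow> real \<Rightarrow> real mat" where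
  "Jx a b c d = mat 9 9 (\<lambda>(i, j). Jx_entry a b c d (i + 1) (j + 1))"

definition real_diagonalizable :: "real mat \<Rightarrow> bool" where
  "real_diagonalizable A \<longleftrightarrow> (\<exists>D :: real mat. diagonal_mat D \<and> similar_mat A D)"

end

theory Submission
  imports Defs "Jordan_Normal_Form.Determinant"
begin

text \<open>At \<open>E\<^sup>1 = 0\<close> every \<open>g\<close> reduces to \<open>2xy/(3(x+y))\<close>, so \<open>\<sigma>\<^sub>l\<close> and \<open>w\<^sub>l\<close> become explicit
  rational functions of \<open>\<lambda>\<close> with \<open>\<sigma>\<^sub>l < w\<^sub>l\<close> and \<open>0 < \<sigma>\<^sub>l + w\<^sub>l\<close>. Along \<open>E\<^sup>1 = t e\<^sub>l\<close> the closure
  entries are \<open>t\<close> times a function continuous at \<open>0\<close>, so their slopes are \<open>\<tau>\<^sub>l(0)\<close> or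
  \<open>(1 - \<tau>\<^sub>l(0))/2\<close>, where \<open>\<tau>\<^sub>l(0) = \<sigma>\<^sub>l(3w\<^sub>l - \<sigma>\<^sub>l)/(w\<^sub>l(\<sigma>\<^sub>l + w\<^sub>l))\<close>. Hence \<open>b, c > 0\<close> and
  \<open>a\<close> has the sign of \<open>\<sigma>\<^sub>1\<close>. The matrix \<open>J\<^sub>x\<close> has eigenvalues \<open>\<plusminus>\<surd>a, \<plusminus>\<surd>b, \<plusminus>\<surd>c, 0, 0, 0\<close>: for
  \<open>a, b, c > 0\<close> an explicit eigenbasis diagonalizes it, while for \<open>a \<le> 0\<close> the \<open>E\<^sup>1\<^sub>1\<close>-coordinate vector
  \<open>e\<close> satisfies \<open>J\<^sup>2 e = a e\<close> but \<open>J e \<noteq> 0\<close>, which no real diagonalizable matrix allows.\<close>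

lemma gfun_zero_zero: "x + y \<noteq> 0 \<Longrightarrow> gfun x y 0 0 * (3 * (x + y)) = 2 * x * y"
  unfolding gfun_def by (simp add: power2_eq_square)

lemma gfun_zero_zero_pos: "0 < x \<Longrightarrow> 0 < y \<Longrightarrow> 0 < gfun x y 0 0"
  unfolding gfun_def by (simp add: zero_less_mult_iff)

lemma gfun_zero_zero_sigma_form:
  fixes x y z :: real
  assumes "x + y \<noteq> 0" "x + z \<noteq> 0"
  shows "(x - gfun x y 0 0 - gfun x z 0 0) * (3 * (x + y) * (x + z))
       = x * (3 * x\<^sup>2 + x * (y + z) - y * z)"
proof -
  have "(x - gfun x y 0 0 - gfun x z 0 0) * (3 * (x + y) * (x + z))
      = x * (3 * (x + y) * (x + z)) - gfun x y 0 0 * (3 * (x + y)) * (x + z)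
        - gfun x z 0 0 * (3 * (x + z)) * (x + y)"
    by (simp add: algebra_simps)
  also have "\<dots> = x * (3 * x\<^sup>2 + x * (y + z) - y * z)"
    unfolding gfun_zero_zero[OF assms(1)] gfun_zero_zero[OF assms(2)]
    by (simp add: algebra_simps power2_eq_square)
  finally show ?thesis .
qed

lemma gfun_zero_zero_sigma_plus_form:
  fixes x y z :: real
  assumes "x + y \<noteq> 0" "x + z \<noteq> 0" "y + z \<noteq> 0"
  shows "(x - gfun x y 0 0 - gfun x z 0 0 + gfun y z 0 0) * (3 * (x + y) * (x + z) * (y + z))
       = 3 * x ^ 3 * (y + z) + x\<^sup>2 * (y + z)\<^sup>2 + 2 * x\<^sup>2 * y * z + x * y * z * (y + z)
         + 2 * y\<^sup>2 * z\<^sup>2"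
proof -
  have "(x - gfun x y 0 0 - gfun x z 0 0 + gfun y z 0 0) * (3 * (x + y) * (x + z) * (y + z))
      = (x - gfun x y 0 0 - gfun x z 0 0) * (3 * (x + y) * (x + z)) * (y + z)
        + gfun y z 0 0 * (3 * (y + z)) * ((x + y) * (x + z))"
    by (simp add: algebra_simps)
  also have "\<dots> = 3 * x ^ 3 * (y + z) + x\<^sup>2 * (y + z)\<^sup>2 + 2 * x\<^sup>2 * y * z + x * y * z * (y + z)
                   + 2 * y\<^sup>2 * z\<^sup>2"
    unfolding gfun_zero_zero_sigma_form[OF assms(1,2)] gfun_zero_zero[OF assms(3)]
    by (simp add: algebra_simps power2_eq_square power3_eq_cube)
  finally show ?thesis .
qed

lemma gfun_zero_zero_sigma_plus_pos:
  fixes x y z :: real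
  assumes "0 < x" "0 < y" "0 < z"
  shows "0 < x - gfun x y 0 0 - gfun x z 0 0 + gfun y z 0 0"
proof -
  have "0 < (x - gfun x y 0 0 - gfun x z 0 0 + gfun y z 0 0) * (3 * (x + y) * (x + z) * (y + z))"
    using assms by (subst gfun_zero_zero_sigma_plus_form) (auto intro!: add_pos_pos mult_pos_pos)
  moreover have "0 < 3 * (x + y) * (x + z) * (y + z)" using assms by simp
  ultimately show ?thesis using zero_less_mult_pos2 by blast
qed

lemma sigma_at_zero:
  "sigma lam (\<lambda>_. 0) l = lam l - gfun (lam l) (lam (oth1 l)) 0 0 - gfun (lam l) (lam (oth2 l)) 0 0"
  by (simp add: sigma_def)

lemma sigma_at_zero_pos_iff:
  assumes "0 < lam 1" "0 < lam 2" "0 < lam 3"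
  shows "0 < sigma lam (\<lambda>_. 0) 1 \<longleftrightarrow> 0 < 3 * (lam 1)\<^sup>2 + lam 1 * (lam 2 + lam 3) - lam 2 * lam 3"
proof -
  let ?k = "3 * (lam 1 + lam 2) * (lam 1 + lam 3)"
  have "sigma lam (\<lambda>_. 0) 1 = lam 1 - gfun (lam 1) (lam 2) 0 0 - gfun (lam 1) (lam 3) 0 0"
    by (simp add: sigma_at_zero oth1_def oth2_def)
  then have "sigma lam (\<lambda>_. 0) 1 * ?k = lam 1 * (3 * (lam 1)\<^sup>2 + lam 1 * (lam 2 + lam 3) - lam 2 * lam 3)"
    using assms gfun_zero_zero_sigma_form[of "lam 1" "lam 2" "lam 3"] by simp
  moreover have "0 < ?k" using assms by simp
  ultimately have "0 < sigma lam (\<lambda>_. 0) 1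
      \<longleftrightarrow> 0 < lam 1 * (3 * (lam 1)\<^sup>2 + lam 1 * (lam 2 + lam 3) - lam 2 * lam 3)"
    by (metis zero_less_mult_iff not_less_iff_gr_or_eq)
  then show ?thesis using assms(1) by (simp add: zero_less_mult_iff)
qed

lemma sigma_wfun_at_zero:
  assumes "0 < lam 1" "0 < lam 2" "0 < lam 3" "l \<in> {1, 2, 3}"
  shows "sigma lam (\<lambda>_. 0) l < wfun lam (\<lambda>_. 0) l"
    and "0 < sigma lam (\<lambda>_. 0) l + wfun lam (\<lambda>_. 0) l"
proof -
  have pos: "0 < lam l" "0 < lam (oth1 l)" "0 < lam (oth2 l)"
    using assms by (auto simp: oth1_def oth2_def)
  show "sigma lam (\<lambda>_. 0) l < wfun lam (\<lambda>_. 0) l"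
    using gfun_zero_zero_pos[OF pos(2,3)] by (simp add: wfun_def)
  show "0 < sigma lam (\<lambda>_. 0) l + wfun lam (\<lambda>_. 0) l"
    using gfun_zero_zero_sigma_plus_pos[OF pos] by (simp add: wfun_def sigma_at_zero)
qed

lemma tau_at_zero:
  "tau lam (\<lambda>_. 0) l = sigma lam (\<lambda>_. 0) l * (3 * wfun lam (\<lambda>_. 0) l - sigma lam (\<lambda>_. 0) l)
     / (wfun lam (\<lambda>_. 0) l * (sigma lam (\<lambda>_. 0) l + wfun lam (\<lambda>_. 0) l))"
proof -
  have "(s\<^sup>2 - 3 * w * s) / (- (w * s) - w\<^sup>2) = s * (3 * w - s) / (w * (s + w))" for s w :: real
  proof -
    have "s\<^sup>2 - 3 * w * s = - (s * (3 * w - s))" "- (w * s) - w\<^sup>2 = - (w * (s + w))"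
      by (simp_all add: algebra_simps power2_eq_square)
    then show ?thesis by simp
  qed
  then show ?thesis by (simp add: tau_def)
qed

lemma tau_ratio_pos_iff:
  fixes s w :: real
  assumes "s < w" "0 < s + w"
  shows "0 < s * (3 * w - s) / (w * (s + w)) \<longleftrightarrow> 0 < s"
proof -
  have "0 < w * (s + w)" "0 < 3 * w - s" using assms by auto
  then show ?thesis by (simp add: pos_less_divide_eq zero_less_mult_iff)
qed

lemma tau_ratio_less_one:
  fixes s w :: real
  assumes "s < w" "0 < s + w"
  shows "s * (3 * w - s) / (w * (s + w)) < 1"
proof -
  have "w * (s + w) - s * (3 * w - s) = (w - s)\<^sup>2" by (simp add: algebra_simps power2_eq_square)
  then have "s * (3 * w - s) < w * (s + w)" using assms by (smt (verit) zero_less_power2)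
  moreover have "0 < w * (s + w)" using assms by auto
  ultimately show ?thesis by simp
qed

lemma tau_at_zero_pos_iff:
  assumes "0 < lam 1" "0 < lam 2" "0 < lam 3" "l \<in> {1, 2, 3}"
  shows "0 < tau lam (\<lambda>_. 0) l \<longleftrightarrow> 0 < sigma lam (\<lambda>_. 0) l"
  unfolding tau_at_zero using tau_ratio_pos_iff sigma_wfun_at_zero[OF assms] by blast

lemma tau_at_zero_less_one:
  assumes "0 < lam 1" "0 < lam 2" "0 < lam 3" "l \<in> {1, 2, 3}"
  shows "tau lam (\<lambda>_. 0) l < 1"
  unfolding tau_at_zero using tau_ratio_less_one sigma_wfun_at_zero[OF assms] by blast

lemma isCont_gfun_args:
  "isCont f t \<Longrightarrow> isCont g t \<Longrightarrow> isCont (\<lambda>u. gfun x y (f u) (g u)) t"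
  unfolding gfun_def by (simp only: divide_inverse) (intro continuous_intros)

lemma isCont_sigma: "(\<And>k. isCont (\<lambda>u. F u k) t) \<Longrightarrow> isCont (\<lambda>u. sigma lam (F u) l) t"
  unfolding sigma_def by (intro continuous_intros isCont_gfun_args)

lemma isCont_wfun: "(\<And>k. isCont (\<lambda>u. F u k) t) \<Longrightarrow> isCont (\<lambda>u. wfun lam (F u) l) t"
  unfolding wfun_def by (intro continuous_intros isCont_gfun_args isCont_sigma)

lemma isCont_tau:
  assumes "\<And>k. isCont (\<lambda>u. F u k) t"
    and "2 * (F t l)\<^sup>2 - wfun lam (F t) l * sigma lam (F t) l - (wfun lam (F t) l)\<^sup>2 \<noteq> 0"
  shows "isCont (\<lambda>u. tau lam (F u) l) t"
  unfolding tau_def using assms by (intro continuous_intros isCont_sigma isCont_wfun) auto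

lemma isCont_tau_axis:
  assumes "0 < lam 1" "0 < lam 2" "0 < lam 3" "l \<in> {1, 2, 3}"
  shows "isCont (\<lambda>t. tau lam ((\<lambda>_. 0)(i := t)) l) 0"
proof (rule isCont_tau)
  show "isCont (\<lambda>t. ((\<lambda>_. 0 :: real)(i := t)) k) 0" for k by (cases "k = i") auto
  have "0 < wfun lam (\<lambda>_. 0) l * (sigma lam (\<lambda>_. 0) l + wfun lam (\<lambda>_. 0) l)"
    using sigma_wfun_at_zero[OF assms] by simp
  then show "2 * (((\<lambda>_. 0)(i := 0)) l)\<^sup>2 - wfun lam ((\<lambda>_. 0)(i := 0)) l * sigma lam ((\<lambda>_. 0)(i := 0)) l
      - (wfun lam ((\<lambda>_. 0)(i := 0)) l)\<^sup>2 \<noteq> 0"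
    by (simp add: fun_upd_idem algebra_simps power2_eq_square)
qed

lemma E3_111_axis_DERIV:
  assumes "0 < lam 1" "0 < lam 2" "0 < lam 3"
  shows "((\<lambda>t. E3 lam ((\<lambda>_. 0)(1 := t)) 1 1 1) has_real_derivative tau lam (\<lambda>_. 0) 1) (at 0)"
  unfolding CARAT_DERIV
  using isCont_tau_axis[OF assms, of 1 1]
  by (intro exI[of _ "\<lambda>t. tau lam ((\<lambda>_. 0)(1 := t)) 1"]) (simp add: E3_def fun_upd_idem)

lemma E3_11l_axis_DERIV:
  assumes "0 < lam 1" "0 < lam 2" "0 < lam 3" "l \<in> {2, 3}"
  shows "((\<lambda>t. E3 lam ((\<lambda>_. 0)(l := t)) 1 1 l) has_real_derivative (1 - tau lam (\<lambda>_. 0) l) / 2) (at 0)"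
proof -
  have "isCont (\<lambda>t. (1 - tau lam ((\<lambda>_. 0)(l := t)) l) / 2) 0"
    using assms isCont_tau_axis[OF assms(1-3), of l l] by (intro continuous_intros) auto
  then show ?thesis
    unfolding CARAT_DERIV using assms
    by (intro exI[of _ "\<lambda>t. (1 - tau lam ((\<lambda>_. 0)(l := t)) l) / 2"]) (auto simp: E3_def fun_upd_idem)
qed

lemma diagonal_mat_mult_vec_index:
  assumes "diagonal_mat D" "D \<in> carrier_mat n n" "v \<in> carrier_vec n" "i < n"
  shows "(D *\<^sub>v v) $ i = D $$ (i, i) * v $ i"
proof -
  have "(D *\<^sub>v v) $ i = (\<Sum>j<n. D $$ (i, j) * v $ j)"
    using assms by (simp add: scalar_prod_def lessThan_atLeast0)
  also have "\<dots> = (\<Sum>j<n. if j = i then D $$ (i, i) * v $ i else 0)"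
    using assms by (intro sum.cong) (auto simp: diagonal_mat_def)
  finally show ?thesis using assms(4) by simp
qed

text \<open>On each eigenline of \<open>A\<close> the relation \<open>A\<^sup>2 v = a v\<close> reads \<open>\<mu>\<^sup>2 x = a x\<close>, so \<open>(\<mu> x)\<^sup>2 = a x\<^sup>2 \<le> 0\<close>.\<close>
lemma real_diagonalizable_square_eigen_nonpos:
  assumes "real_diagonalizable A" "A \<in> carrier_mat n n" "v \<in> carrier_vec n"
    and "a \<le> 0" and "A *\<^sub>v (A *\<^sub>v v) = a \<cdot>\<^sub>v v"
  shows "A *\<^sub>v v = 0\<^sub>v n"
proof -
  obtain D P Q where D: "diagonal_mat D" "D \<in> carrier_mat n n"
    and PQ: "P \<in> carrier_mat n n" "Q \<in> carrier_mat n n" "Q * P = 1\<^sub>m n" and A: "A = P * D * Q"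
    using assms(1,2) unfolding real_diagonalizable_def
    by (metis (no_types, lifting) carrier_matD(1) insert_subset similar_matD)
  define w where "w = Q *\<^sub>v v"
  have w: "w \<in> carrier_vec n" using PQ assms(3) by (simp add: w_def)
  have A_vec: "A *\<^sub>v x = P *\<^sub>v (D *\<^sub>v (Q *\<^sub>v x))" if "x \<in> carrier_vec n" for x
    using A D PQ that by (simp add: assoc_mult_mat_vec[of _ n n _ n])
  have QP_vec: "Q *\<^sub>v (P *\<^sub>v x) = x" if "x \<in> carrier_vec n" for x
    using PQ that by (simp flip: assoc_mult_mat_vec[of _ n n _ n])
  have Av: "A *\<^sub>v v = P *\<^sub>v (D *\<^sub>v w)" using A_vec[OF assms(3)] by (simp add: w_def)
  have "A *\<^sub>v (A *\<^sub>v v) = P *\<^sub>v (D *\<^sub>v (D *\<^sub>v w))"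
    using D PQ w by (simp add: Av A_vec QP_vec)
  then have "D *\<^sub>v (D *\<^sub>v w) = Q *\<^sub>v (A *\<^sub>v (A *\<^sub>v v))"
    using D w by (simp add: QP_vec)
  also have "\<dots> = a \<cdot>\<^sub>v w"
    using assms(5) PQ assms(3) by (simp add: w_def mult_mat_vec)
  finally have DDw: "D *\<^sub>v (D *\<^sub>v w) = a \<cdot>\<^sub>v w" .
  have "D *\<^sub>v w = 0\<^sub>v n"
  proof (rule eq_vecI)
    fix i assume "i < dim_vec (0\<^sub>v n :: real vec)"
    then have i: "i < n" by simp
    let ?\<mu> = "D $$ (i, i)" and ?x = "w $ i"
    have Dw: "D *\<^sub>v w \<in> carrier_vec n" using D w by simp
    have "?\<mu> * (?\<mu> * ?x) = (D *\<^sub>v (D *\<^sub>v w)) $ i"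
      by (simp only: diagonal_mat_mult_vec_index[OF D Dw i] diagonal_mat_mult_vec_index[OF D w i])
    also have "\<dots> = a * ?x" using DDw i w by simp
    finally have "(?\<mu> * ?x)\<^sup>2 = a * ?x\<^sup>2" by (simp add: power2_eq_square algebra_simps)
    moreover have "a * ?x\<^sup>2 \<le> 0" using assms(4) by (simp add: mult_nonpos_nonneg)
    ultimately have "?\<mu> * ?x = 0" by (metis antisym zero_le_power2 zero_eq_power2)
    then show "(D *\<^sub>v w) $ i = 0\<^sub>v n $ i"
      unfolding diagonal_mat_mult_vec_index[OF D w i] using i by simp
  qed (use D in simp)
  then show ?thesis using Av PQ by auto
qed

lemma less_9_cases:
  "(i :: nat) < 9 \<Longrightarrow> i = 0 \<or> i = 1 \<or> i = 2 \<or> i = 3 \<or> i = 4 \<or> i = 5 \<or> i = 6 \<or> i = 7 \<or> i = 8"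
  by auto

lemma sum_atLeastLessThan_9:
  "sum f {0..<9 :: nat} = f 0 + f 1 + f 2 + f 3 + f 4 + f 5 + f 6 + f 7 + f 8"
  by (simp add: eval_nat_numeral)

lemma Jx_square_unit_vec: "Jx a b c d *\<^sub>v (Jx a b c d *\<^sub>v unit_vec 9 1) = a \<cdot>\<^sub>v unit_vec 9 1"
proof (rule eq_vecI)
  fix i assume "i < dim_vec (a \<cdot>\<^sub>v unit_vec 9 1 :: real vec)"
  then show "(Jx a b c d *\<^sub>v (Jx a b c d *\<^sub>v unit_vec 9 1)) $ i = (a \<cdot>\<^sub>v unit_vec 9 1) $ i"
    using less_9_cases[of i]
    by (auto simp: Jx_def Jx_entry_def scalar_prod_def sum_atLeastLessThan_9)
qed (simp add: Jx_def)

lemma real_diagonalizable_Jx_imp_pos: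
  assumes "real_diagonalizable (Jx a b c d)"
  shows "0 < a"
proof (rule ccontr)
  assume "\<not> 0 < a"
  then have "Jx a b c d *\<^sub>v unit_vec 9 1 = 0\<^sub>v 9"
    by (intro real_diagonalizable_square_eigen_nonpos[OF assms _ _ _ Jx_square_unit_vec])
      (auto simp: Jx_def)
  moreover have "(Jx a b c d *\<^sub>v unit_vec 9 1) $ 0 = 1"
    by (simp add: Jx_def Jx_entry_def scalar_prod_def sum_atLeastLessThan_9)
  ultimately show False by simp
qed

definition Jx_eigenvectors :: "real \<Rightarrow> real \<Rightarrow> real \<Rightarrow> real \<Rightarrow> real mat" where
  "Jx_eigenvectors s r q d = mat_of_rows_list 9
    [[1/s, -1/s, 1, 0, 0,  0, 0,  0, 0],
     [1,    1,   0, 0, 0,  0, 0,  0, 0],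
     [0,    0,   0, 0, 1,  1, 0,  0, 0],
     [0,    0,   0, 0, 0,  0, 1,  1, 0],
     [s,   -s,   0, 0, 0,  0, 0,  0, 0],
     [0,    0,   0, 0, r, -r, 0,  0, 0],
     [0,    0,   0, 0, 0,  0, q, -q, 0],
     [d/s, -d/s, 0, 1, 0,  0, 0,  0, 0],
     [0,    0,   0, 0, 0,  0, 0,  0, 1]]"

definition Jx_eigenvectors_inv :: "real \<Rightarrow> real \<Rightarrow> real \<Rightarrow> real \<Rightarrow> real mat" where
  "Jx_eigenvectors_inv s r q d = mat_of_rows_list 9
    [[0, 1/2, 0,   0,   1/(2*s),    0,         0,         0, 0],
     [0, 1/2, 0,   0,  -1/(2*s),    0,         0,         0, 0],
     [1, 0,   0,   0,  -1/(s*s),    0,         0,         0, 0],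
     [0, 0,   0,   0,  -d/(s*s),    0,         0,         1, 0],
     [0, 0,   1/2, 0,   0,          1/(2*r),   0,         0, 0],
     [0, 0,   1/2, 0,   0,         -1/(2*r),   0,         0, 0],
     [0, 0,   0,   1/2, 0,          0,         1/(2*q),   0, 0],
     [0, 0,   0,   1/2, 0,          0,        -1/(2*q),   0, 0],
     [0, 0,   0,   0,   0,          0,         0,         0, 1]]"

lemma Jx_eigenvectors_inverse:
  assumes "s \<noteq> 0" "r \<noteq> 0" "q \<noteq> 0"
  shows "Jx_eigenvectors s r q d * Jx_eigenvectors_inv s r q d = 1\<^sub>m 9"
proof (rule eq_matI)
  fix i j assume "i < dim_row (1\<^sub>m 9 :: real mat)" "j < dim_col (1\<^sub>m 9 :: real mat)"
  then show "(Jx_eigenvectors s r q d * Jx_eigenvectors_inv s r q d) $$ (i, j) = 1\<^sub>m 9 $$ (i, j)"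
    using less_9_cases[of i] less_9_cases[of j]
    by (auto simp: Jx_eigenvectors_def Jx_eigenvectors_inv_def mat_of_rows_list_def
        scalar_prod_def sum_atLeastLessThan_9 assms)
qed (auto simp: Jx_eigenvectors_def Jx_eigenvectors_inv_def mat_of_rows_list_def)

lemma Jx_mult_eigenvectors:
  assumes "s \<noteq> 0"
  shows "Jx (s * s) (r * r) (q * q) d * Jx_eigenvectors s r q d
       = Jx_eigenvectors s r q d * mk_diagonal [s, -s, 0, 0, r, -r, q, -q, 0]" (is "?L = ?R")
proof (rule eq_matI)
  fix i j assume "i < dim_row ?R" "j < dim_col ?R"
  then show "?L $$ (i, j) = ?R $$ (i, j)"
    using less_9_cases[of i] less_9_cases[of j]
    by (auto simp: Jx_eigenvectors_def Jx_def Jx_entry_def mk_diagonal_def mat_of_rows_list_def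
        scalar_prod_def sum_atLeastLessThan_9 assms)
qed (auto simp: Jx_eigenvectors_def Jx_def mat_of_rows_list_def mk_diagonal_def)

lemma real_diagonalizable_Jx:
  assumes "0 < a" "0 < b" "0 < c"
  shows "real_diagonalizable (Jx a b c d)"
proof -
  define s r q where "s = sqrt a" and "r = sqrt b" and "q = sqrt c"
  have nz: "s \<noteq> 0" "r \<noteq> 0" "q \<noteq> 0" using assms by (simp_all add: s_def r_def q_def)
  have J: "Jx a b c d = Jx (s * s) (r * r) (q * q) d"
    using assms by (simp add: s_def r_def q_def)
  let ?J = "Jx a b c d" and ?P = "Jx_eigenvectors s r q d" and ?Q = "Jx_eigenvectors_inv s r q d"
    and ?D = "mk_diagonal [s, -s, 0, 0, r, -r, q, -q, 0]"
  have carrier: "?J \<in> carrier_mat 9 9" "?P \<in> carrier_mat 9 9" "?Q \<in> carrier_mat 9 9"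
      "?D \<in> carrier_mat 9 9"
    by (simp_all add: Jx_def Jx_eigenvectors_def Jx_eigenvectors_inv_def mat_of_rows_list_def
        carrier_matI mk_diagonal_dim)
  have PQ: "?P * ?Q = 1\<^sub>m 9" using Jx_eigenvectors_inverse[OF nz] .
  have QP: "?Q * ?P = 1\<^sub>m 9" using mat_mult_left_right_inverse[OF carrier(2,3) PQ] .
  have "?J = ?J * (?P * ?Q)" using carrier by (simp add: PQ)
  also have "\<dots> = (?J * ?P) * ?Q" using carrier by simp
  also have "\<dots> = ?P * ?D * ?Q" using Jx_mult_eigenvectors[OF nz(1)] J by simp
  finally have "similar_mat ?J ?D" using carrier by (intro similar_matI[OF _ PQ QP]) auto
  then show ?thesis unfolding real_diagonalizable_def using mk_diagonal_diagonal by blast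
qed

lemma real_diagonalizable_Jx_iff:
  "0 < b \<Longrightarrow> 0 < c \<Longrightarrow> real_diagonalizable (Jx a b c d) \<longleftrightarrow> 0 < a"
  using real_diagonalizable_Jx real_diagonalizable_Jx_imp_pos by blast

theorem mainTheorem13:
  fixes lam :: "nat \<Rightarrow> real" and a b c d :: real
  assumes "lam 1 > 0" and "lam 2 > 0" and "lam 3 > 0"
    and "((\<lambda>t. E3 lam ((\<lambda>_. 0)(1 := t)) 1 1 1) has_real_derivative a) (at 0)"
    and "((\<lambda>t. E3 lam ((\<lambda>_. 0)(2 := t)) 1 1 2) has_real_derivative b) (at 0)"
    and "((\<lambda>t. E3 lam ((\<lambda>_. 0)(3 := t)) 1 1 3) has_real_derivative c) (at 0)"
    and "((\<lambda>t. E3 lam ((\<lambda>_. 0)(1 := t)) 1 2 2) has_real_derivative d) (at 0)"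
  shows "(real_diagonalizable (Jx a b c d) \<longleftrightarrow> sigma lam (\<lambda>_. 0) 1 > 0)
       \<and> (sigma lam (\<lambda>_. 0) 1 > 0 \<longleftrightarrow>
            3 * (lam 1)^2 + lam 1 * (lam 2 + lam 3) - lam 2 * lam 3 > 0)"
proof -
  note pos = assms(1-3)
  have a: "a = tau lam (\<lambda>_. 0) 1"
    using DERIV_unique[OF assms(4) E3_111_axis_DERIV[OF pos]] .
  have b: "b = (1 - tau lam (\<lambda>_. 0) 2) / 2"
    using DERIV_unique[OF assms(5) E3_11l_axis_DERIV[OF pos, of 2]] by simp
  have c: "c = (1 - tau lam (\<lambda>_. 0) 3) / 2"
    using DERIV_unique[OF assms(6) E3_11l_axis_DERIV[OF pos, of 3]] by simp
  have "0 < b" "0 < c" using b c tau_at_zero_less_one[OF pos, of 2] tau_at_zero_less_one[OF pos, of 3]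
    by simp_all
  moreover have "0 < a \<longleftrightarrow> 0 < sigma lam (\<lambda>_. 0) 1"
    using a tau_at_zero_pos_iff[OF pos] by simp
  ultimately show ?thesis using real_diagonalizable_Jx_iff sigma_at_zero_pos_iff[OF pos] by simp
qed

end
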